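(* For all integers $n\geq0$, \[ \sum_{j=0}^n\binom{2j}{j}4^{n-j}O_jH_{n-j}=2^{2n-1}(n+1)\Bigl((1-H_{n+1})^2+1-H_{n+1}^{(2)}\Bigr)-\sum_{j=1}^nC_{n-j}4^{j-1}j\Bigl((1-H_j)^2+1-H_j^{(2)}\Bigr). \]
   Context: $H_n=\sum_{k=1}^n\frac1k$ ($H_0=0$), $H_n^{(2)}=\sum_{k=1}^n\frac1{k^2}$ ($H_0^{(2)}=0$), $O_n=\sum_{k=1}^n\frac1{2k-1}$ ($O_0=0$), and $C_n=\frac1{n+1}\binom{2n}{n}$ is the $n$th Catalan number. An empty sum is $0$. *)

theory Defs
  imports Complex_Main
begin

definition H :: "nat \<Rightarrow> real" where
  "H n = (\<Sum>k=1..n. 1 / real k)"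

definition H2 :: "nat \<Rightarrow> real" where
  "H2 n = (\<Sum>k=1..n. 1 / (real k)^2)"

definition oddH :: "nat \<Rightarrow> real" where
  "oddH n = (\<Sum>k=1..n. 1 / (2 * real k - 1))"

definition catalan :: "nat \<Rightarrow> real" where
  "catalan n = real ((2*n) choose n) / real (n + 1)"

end

(* Write c_k for the central binomial coefficient, so that sum_k c_k x^k = (1 - 4x)^(-1/2),
   and (a)_k / k! for the coefficients of (1 - x)^(-a).  Differentiating Vandermonde's identity
   for these coefficients with respect to a parameter yields weights given by the logarithmic
   derivative of the Pochhammer symbol, which is H_k at a = 1 and 2 O_k at a = 1/2; this gives
   sum_k c_k c_(n-k) O_(n-k) = 4^n H_n / 2.  Hence, as power series,
     (sum_j c_j O_j x^j) (sum_m 4^m H_m x^m) = sqrt (1 - 4x) (sum_m 4^m H_m x^m)^2 / 2.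
   The square is evaluated by the harmonic convolution
     sum_m H_m H_(n-m) = (n+1) ((1 - H_(n+1))^2 + 1 - H2_(n+1)),
   and sqrt (1 - 4x) = 1 - 2x C(x), with C the Catalan generating function, produces the
   Catalan sum. *)

theory Submission
  imports Defs "HOL-Computational_Algebra.Formal_Power_Series"
begin

unbundle fps_syntax

definition multichoose :: "real \<Rightarrow> nat \<Rightarrow> real" where
  "multichoose a k = pochhammer a k / fact k"

definition pochhammer_logderiv :: "real \<Rightarrow> nat \<Rightarrow> real" where
  "pochhammer_logderiv b m = (\<Sum>i<m. 1 / (b + real i))"

lemma multichoose_gchoose: "multichoose a k = (-1)^k * ((-a) gchoose k)"
  by (simp add: multichoose_def gbinomial_pochhammer)

lemma multichoose_Vandermonde:
  "(\<Sum>k=0..n. multichoose a k * multichoose b (n-k)) = multichoose (a+b) n"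
proof -
  have "(\<Sum>k=0..n. multichoose a k * multichoose b (n-k))
      = (-1)^n * (\<Sum>k=0..n. ((-a) gchoose k) * ((-b) gchoose (n-k)))"
    by (auto simp: sum_distrib_left multichoose_gchoose power_add[symmetric] intro!: sum.cong)
  also have "\<dots> = multichoose (a+b) n"
    by (simp add: gbinomial_Vandermonde multichoose_gchoose)
  finally show ?thesis .
qed

lemma has_real_derivative_pochhammer:
  assumes "\<And>i. i < m \<Longrightarrow> b + real i \<noteq> 0"
  shows "((\<lambda>x. pochhammer x m) has_real_derivative
           pochhammer b m * pochhammer_logderiv b m) (at b)"
  using assms
proof (induction m)
  case 0
  then show ?case by (simp add: pochhammer_logderiv_def)
next
  case (Suc m)
  have "b + real m \<noteq> 0"
    using Suc.prems by simp
  then have "pochhammer b m + pochhammer b m * pochhammer_logderiv b m * (b + real m)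
      = pochhammer b (Suc m) * pochhammer_logderiv b (Suc m)"
    by (simp add: pochhammer_rec' pochhammer_logderiv_def field_simps)
  moreover have "((\<lambda>x. (x + real m) * pochhammer x m) has_real_derivative
          pochhammer b m + pochhammer b m * pochhammer_logderiv b m * (b + real m)) (at b)"
    using Suc by (auto intro!: derivative_eq_intros)
  ultimately show ?case
    by (simp only: pochhammer_rec')
qed

lemma has_real_derivative_multichoose:
  assumes "\<And>i. i < m \<Longrightarrow> b + real i \<noteq> 0"
  shows "((\<lambda>x. multichoose x m) has_real_derivative
           multichoose b m * pochhammer_logderiv b m) (at b)"
  unfolding multichoose_def
  using has_real_derivative_pochhammer[OF assms] by (auto intro!: derivative_eq_intros)

lemma multichoose_Vandermonde_logderiv:
  assumes "b > 0" "a + b > 0"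
  shows "(\<Sum>k=0..n. multichoose a k * (multichoose b (n-k) * pochhammer_logderiv b (n-k)))
           = multichoose (a+b) n * pochhammer_logderiv (a+b) n"
proof (rule DERIV_unique)
  show "((\<lambda>x. \<Sum>k=0..n. multichoose a k * multichoose x (n-k)) has_real_derivative
          (\<Sum>k=0..n. multichoose a k * (multichoose b (n-k) * pochhammer_logderiv b (n-k)))) (at b)"
    using assms by (intro DERIV_sum DERIV_cmult has_real_derivative_multichoose) auto
  have "((\<lambda>x. multichoose x n) has_real_derivative
          multichoose (a+b) n * pochhammer_logderiv (a+b) n) (at (b + a))"
    using assms by (simp add: add.commute has_real_derivative_multichoose)
  then have "((\<lambda>x. multichoose (x + a) n) has_real_derivative
          multichoose (a+b) n * pochhammer_logderiv (a+b) n) (at b)"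
    by (rule DERIV_shift[THEN iffD1])
  then show "((\<lambda>x. \<Sum>k=0..n. multichoose a k * multichoose x (n-k)) has_real_derivative
          multichoose (a+b) n * pochhammer_logderiv (a+b) n) (at b)"
    by (simp add: multichoose_Vandermonde add.commute)
qed

abbreviation central_binom :: "nat \<Rightarrow> real" where
  "central_binom k \<equiv> real ((2*k) choose k)"

lemma central_binom_multichoose: "central_binom k = 4^k * multichoose (1/2) k"
proof -
  have "central_binom k = fact (2*k) / (fact k * fact k)"
    by (simp add: binomial_fact mult_2)
  also have "\<dots> = 4^k * multichoose (1/2) k"
    by (simp add: fact_double multichoose_def power_mult)
  finally show ?thesis .
qed

lemma multichoose_one: "multichoose 1 n = 1"
  by (simp add: multichoose_def pochhammer_fact[symmetric])

lemma pochhammer_logderiv_one: "pochhammer_logderiv 1 n = H n"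
  by (induction n) (simp_all add: pochhammer_logderiv_def H_def add.commute)

lemma pochhammer_logderiv_half: "pochhammer_logderiv (1/2) n = 2 * oddH n"
  by (induction n) (simp_all add: pochhammer_logderiv_def oddH_def field_simps)

text \<open>The coefficients of \<open>sqrt (1 - 4x) = 1 - 2x C(x)\<close>.\<close>
definition sqrt_coeff :: "nat \<Rightarrow> real" where
  "sqrt_coeff j = (if j = 0 then 1 else -2 * catalan (j-1))"

lemma sqrt_coeff_multichoose: "sqrt_coeff j = 4^j * multichoose (-(1/2)) j"
proof (cases j)
  case (Suc i)
  have "4^j * multichoose (-(1/2)) j = - 2 * (4^i * multichoose (1/2) i) / real (Suc i)"
    using Suc by (simp add: multichoose_def pochhammer_rec fact_Suc field_simps del: of_nat_Suc)
  then show ?thesis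
    using Suc by (simp add: sqrt_coeff_def catalan_def central_binom_multichoose)
qed (simp add: sqrt_coeff_def multichoose_def)

lemma central_binom_oddH_convolution:
  "(\<Sum>k=0..n. central_binom k * (central_binom (n-k) * oddH (n-k))) = 4^n * H n / 2"
proof -
  have "(\<Sum>k=0..n. central_binom k * (central_binom (n-k) * oddH (n-k)))
      = 4^n / 2 * (\<Sum>k=0..n. multichoose (1/2) k *
          (multichoose (1/2) (n-k) * pochhammer_logderiv (1/2) (n-k)))"
    by (auto simp: sum_distrib_left central_binom_multichoose pochhammer_logderiv_half
        power_add[symmetric] intro!: sum.cong)
  also have "\<dots> = 4^n * H n / 2"
    using multichoose_Vandermonde_logderiv[of "1/2" "1/2" n]
    by (simp add: multichoose_one pochhammer_logderiv_one)
  finally show ?thesis .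
qed

lemma central_binom_sqrt_coeff_convolution:
  "(\<Sum>k=0..n. central_binom k * sqrt_coeff (n-k)) = (if n = 0 then 1 else 0)"
proof -
  have "(\<Sum>k=0..n. central_binom k * sqrt_coeff (n-k))
      = 4^n * (\<Sum>k=0..n. multichoose (1/2) k * multichoose (-(1/2)) (n-k))"
    by (auto simp: sum_distrib_left central_binom_multichoose sqrt_coeff_multichoose
        power_add[symmetric] intro!: sum.cong)
  also have "\<dots> = 4^n * multichoose 0 n"
    by (simp add: multichoose_Vandermonde)
  finally show ?thesis
    by (simp add: multichoose_def pochhammer_0_left)
qed

lemma H_0 [simp]: "H 0 = 0"
  by (simp add: H_def)

lemma H_Suc: "H (Suc n) = H n + 1 / real (Suc n)"
  by (simp add: H_def)

lemma H2_Suc: "H2 (Suc n) = H2 n + 1 / (real (Suc n))^2"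
  by (simp add: H2_def)

lemma H_Suc_diff: "m \<le> n \<Longrightarrow> H (Suc n - m) = H (n - m) + 1 / real (Suc n - m)"
  by (simp add: Suc_diff_le H_Suc)

lemma sum_reciprocal_complementary_products:
  "(\<Sum>m=0..n. 1 / (real (m+1) * real (n+1-m))) = 2 * H (n+1) / real (n+2)"
proof -
  have partial_fractions: "1 / (x * y) = (1 / x + 1 / y) / (x + y)" if "x > 0" "y > 0" for x y :: real
    using that by (simp add: divide_simps)
  have "(\<Sum>m=0..n. 1 / (real (m+1) * real (n+1-m)))
      = (\<Sum>m=0..n. (1 / real (m+1) + 1 / real (n+1-m)) / real (n+2))"
    by (intro sum.cong refl) (simp add: partial_fractions)
  also have "\<dots> = ((\<Sum>m=0..n. 1 / real (m+1)) + (\<Sum>m=0..n. 1 / real (n+1-m))) / real (n+2)"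
    by (simp only: sum.distrib[symmetric] sum_divide_distrib)
  also have "(\<Sum>m=0..n. 1 / real (n+1-m)) = (\<Sum>m=0..n. 1 / real (m+1))"
    using sum.atLeastAtMost_rev[of "\<lambda>m. 1 / real (m+1)" 0 n] by (simp add: Suc_diff_le)
  also have "(\<Sum>m=0..n. 1 / real (m+1)) = H (n+1)"
    by (induction n) (simp_all add: H_Suc)
  finally show ?thesis by simp
qed

lemma H_reciprocal_convolution: "(\<Sum>m=0..n. H (n-m) / real (m+1)) = H (n+1)^2 - H2 (n+1)"
proof (induction n)
  case 0
  then show ?case by (simp add: H_def H2_def)
next
  case (Suc n)
  have complete_square: "h^2 - q + 2 * h / d = (h + 1 / d)^2 - (q + 1 / d^2)"
    if "d \<noteq> 0" for d h q :: real
    using that by (simp add: field_simps power2_eq_square)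
  have "(\<Sum>m=0..Suc n. H (Suc n - m) / real (m+1))
      = (\<Sum>m=0..n. H (n - m) / real (m+1) + 1 / (real (m+1) * real (n+1-m)))"
    by (auto simp: H_Suc_diff add_divide_distrib intro!: sum.cong)
  also have "\<dots> = H (n+1)^2 - H2 (n+1) + 2 * H (n+1) / real (n+2)"
    by (simp only: sum.distrib Suc.IH sum_reciprocal_complementary_products)
  also have "\<dots> = (H (n+1) + 1 / real (n+2))^2 - (H2 (n+1) + 1 / real (n+2)^2)"
    using complete_square[of "real (n+2)"] by simp
  also have "\<dots> = H (n+2)^2 - H2 (n+2)"
    by (simp add: H_Suc H2_Suc)
  finally show ?case by simp
qed

lemma H_convolution:
  "(\<Sum>m=0..n. H m * H (n-m)) = real (n+1) * ((1 - H (n+1))^2 + 1 - H2 (n+1))"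
proof (induction n)
  case 0
  then show ?case by (simp add: H_def H2_def)
next
  case (Suc n)
  have complete_square: "(d - 1) * ((1 - h)^2 + 1 - q) + (h^2 - q)
      = d * ((1 - (h + 1 / d))^2 + 1 - (q + 1 / d^2))" if "d \<noteq> 0" for d h q :: real
    using that by (simp add: field_simps power2_eq_square)
  have "(\<Sum>m=0..Suc n. H m * H (Suc n - m))
      = (\<Sum>m=0..n. H m * H (n - m)) + (\<Sum>m=0..n. H m / real (n+1-m))"
    by (auto simp: H_Suc_diff distrib_left sum.distrib intro!: sum.cong)
  also have "(\<Sum>m=0..n. H m / real (n+1-m)) = (\<Sum>m=0..n. H (n-m) / real (m+1))"
    using sum.atLeastAtMost_rev[of "\<lambda>m. H m / real (n+1-m)" 0 n] by (simp add: Suc_diff_le)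
  also have "(\<Sum>m=0..n. H m * H (n - m)) + \<dots>
      = real (n+1) * ((1 - H (n+1))^2 + 1 - H2 (n+1)) + (H (n+1)^2 - H2 (n+1))"
    by (simp only: Suc.IH H_reciprocal_convolution)
  also have "\<dots> = real (n+2) * ((1 - (H (n+1) + 1 / real (n+2)))^2 + 1
      - (H2 (n+1) + 1 / real (n+2)^2))"
    using complete_square[of "real (n+2)"] by simp
  also have "\<dots> = real (n+2) * ((1 - H (n+2))^2 + 1 - H2 (n+2))"
    by (simp add: H_Suc H2_Suc)
  finally show ?case by simp
qed

lemma sqrt_coeff_convolution:
  "(\<Sum>i=0..n. a i * sqrt_coeff (n-i)) = a n - 2 * (\<Sum>j=1..n. catalan (n-j) * a (j-1))"
proof (cases n)
  case 0
  then show ?thesis by (simp add: sqrt_coeff_def)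
next
  case (Suc m)
  have "(\<Sum>i=0..n. a i * sqrt_coeff (n-i)) = (\<Sum>i=0..m. a i * sqrt_coeff (Suc m - i)) + a n"
    using Suc by (simp add: sqrt_coeff_def)
  also have "(\<Sum>i=0..m. a i * sqrt_coeff (Suc m - i)) = - 2 * (\<Sum>i=0..m. catalan (m-i) * a i)"
    by (auto simp: sum_distrib_left sqrt_coeff_def Suc_diff_le intro!: sum.cong)
  also have "(\<Sum>i=0..m. catalan (m-i) * a i) = (\<Sum>j=1..n. catalan (n-j) * a (j-1))"
    using Suc sum.shift_bounds_cl_Suc_ivl[of "\<lambda>j. catalan (n-j) * a (j-1)" 0 m]
    by (simp del: sum.cl_ivl_Suc)
  finally show ?thesis by simp
qed

lemma central_binom_oddH_H_convolution:
  "(\<Sum>j=0..n. central_binom j * 4^(n-j) * oddH j * H (n-j))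
     = (\<Sum>i=0..n. 4^i / 2 * (real (i+1) * ((1 - H (i+1))^2 + 1 - H2 (i+1))) * sqrt_coeff (n-i))"
proof -
  define B G F S :: "real fps"
    where "B = Abs_fps central_binom"
      and "G = Abs_fps (\<lambda>j. central_binom j * oddH j)"
      and "F = Abs_fps (\<lambda>m. 4^m * H m)"
      and "S = Abs_fps sqrt_coeff"
  have "B * S = 1"
    by (rule fps_ext) (simp add: B_def S_def fps_mult_nth central_binom_sqrt_coeff_convolution)
  have "B * G = fps_const (1/2) * F"
    by (rule fps_ext)
      (simp add: B_def G_def F_def fps_mult_nth[where f = "Abs_fps _"] central_binom_oddH_convolution)
  have square: "F * F = Abs_fps (\<lambda>i. 4^i * (real (i+1) * ((1 - H (i+1))^2 + 1 - H2 (i+1))))"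
  proof (rule fps_ext)
    fix i
    have "(F * F) $ i = 4^i * (\<Sum>m=0..i. H m * H (i-m))"
      by (auto simp: F_def fps_mult_nth sum_distrib_left power_add[symmetric] intro!: sum.cong)
    then show "(F * F) $ i
        = Abs_fps (\<lambda>i. 4^i * (real (i+1) * ((1 - H (i+1))^2 + 1 - H2 (i+1)))) $ i"
      by (simp only: H_convolution fps_nth_Abs_fps)
  qed
  have "G * F = (B * S) * G * F"
    using \<open>B * S = 1\<close> by simp
  also have "\<dots> = (B * G) * F * S"
    by (simp add: mult_ac)
  also have "\<dots> = fps_const (1/2) * (F * F) * S"
    using \<open>B * G = fps_const (1/2) * F\<close> by (simp add: mult_ac)
  finally have "(G * F) $ n = (fps_const (1/2) * (F * F) * S) $ n"
    by (rule arg_cong)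
  moreover have "(G * F) $ n = (\<Sum>j=0..n. central_binom j * 4^(n-j) * oddH j * H (n-j))"
    unfolding G_def F_def fps_mult_nth by (simp add: mult_ac)
  moreover have "(fps_const (1/2) * (F * F) * S) $ n
      = (\<Sum>i=0..n. 4^i / 2 * (real (i+1) * ((1 - H (i+1))^2 + 1 - H2 (i+1))) * sqrt_coeff (n-i))"
    unfolding mult.assoc fps_mult_left_const_nth square S_def fps_mult_nth[where f = "Abs_fps _"]
    by (simp add: sum_distrib_left mult_ac)
  ultimately show ?thesis
    by simp
qed

theorem corollary10:
  fixes n :: nat
  shows "(\<Sum>j=0..n. real ((2*j) choose j) * 4^(n-j) * oddH j * H (n-j))
    = 2 powr (2 * real n - 1) * real (n+1) * ((1 - H (n+1))^2 + 1 - H2 (n+1))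
      - (\<Sum>j=1..n. catalan (n-j) * 4^(j-1) * real j * ((1 - H j)^2 + 1 - H2 j))"
proof -
  define a where "a i = 4^i / 2 * (real (i+1) * ((1 - H (i+1))^2 + 1 - H2 (i+1)))" for i
  have "(\<Sum>j=0..n. central_binom j * 4^(n-j) * oddH j * H (n-j)) = (\<Sum>i=0..n. a i * sqrt_coeff (n-i))"
    unfolding a_def by (rule central_binom_oddH_H_convolution)
  also have "\<dots> = a n - 2 * (\<Sum>j=1..n. catalan (n-j) * a (j-1))"
    by (rule sqrt_coeff_convolution)
  also have "2 * (\<Sum>j=1..n. catalan (n-j) * a (j-1))
      = (\<Sum>j=1..n. catalan (n-j) * 4^(j-1) * real j * ((1 - H j)^2 + 1 - H2 j))"
    by (auto simp: a_def sum_distrib_left intro!: sum.cong)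
  finally have "(\<Sum>j=0..n. central_binom j * 4^(n-j) * oddH j * H (n-j))
      = a n - (\<Sum>j=1..n. catalan (n-j) * 4^(j-1) * real j * ((1 - H j)^2 + 1 - H2 j))" .
  moreover have "2 powr (2 * real n) = 4^n"
    using powr_realpow[of 2 "2 * n"] by (simp add: power_mult)
  ultimately show ?thesis
    by (simp add: a_def powr_diff)
qed

end
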